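(* Let $A \in \{-1,0,1\}^{m\times n}$ have pairwise distinct columns $A_1,\dots,A_n$, and let $t \in [0,1)^m$ be such that $\Delta_k(t+A) \le 1$ for $k \in \{1,2\}$. Then every set $E \in \mathcal{E}_A$ is the support of at most two columns of $A$.
   Context: For a real matrix $M$ and $k\ge 1$, $\Delta_k(M)$ denotes the maximum of $|\det(B)|$ over all $k\times k$ submatrices $B$ of $M$. For $t\in\mathbb{R}^m$, $t+A$ is the matrix with columns $t+A_1,\dots,t+A_n$. The support of $y \in \mathbb{R}^m$ is $\mathrm{supp}(y)=\{j\in[m]: y_j\neq 0\}$, and $\mathcal{E}_A = \{\mathrm{supp}(A_i) : i \in [n]\}\subseteq 2^{[m]}$. *)

theory Defs
  imports "HOL-Analysis.Analysis"
begin

text \<open>Matrices of size m x n are represented as functions M :: nat => nat => real,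
  where only the entries M i j with i < m and j < n are relevant.\<close>

definition subdet :: "(nat \<Rightarrow> nat \<Rightarrow> real) \<Rightarrow> nat set \<Rightarrow> nat set \<Rightarrow> real" where
  "subdet M R C =
     (let k = card R; rs = sorted_list_of_set R; cs = sorted_list_of_set C in
      (\<Sum>p | p permutes {..<k}. of_int (sign p) * (\<Prod>i<k. M (rs ! i) (cs ! (p i)))))"

definition Delta :: "nat \<Rightarrow> nat \<Rightarrow> nat \<Rightarrow> (nat \<Rightarrow> nat \<Rightarrow> real) \<Rightarrow> real" where
  "Delta k m n M = Max (insert 0 {\<bar>subdet M R C\<bar> | R C.
      R \<subseteq> {..<m} \<and> C \<subseteq> {..<n} \<and> card R = k \<and> card C = k})"

definition shift_mat :: "(nat \<Rightarrow> real) \<Rightarrow> (nat \<Rightarrow> nat \<Rightarrow> real) \<Rightarrow> (nat \<Rightarrow> nat \<Rightarrow> real)" where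
  "shift_mat t A = (\<lambda>i j. t i + A i j)"

definition col_supp :: "nat \<Rightarrow> (nat \<Rightarrow> nat \<Rightarrow> real) \<Rightarrow> nat \<Rightarrow> nat set" where
  "col_supp m A j = {i. i < m \<and> A i j \<noteq> 0}"

definition supp_sets :: "nat \<Rightarrow> nat \<Rightarrow> (nat \<Rightarrow> nat \<Rightarrow> real) \<Rightarrow> nat set set" where
  "supp_sets m n A = col_supp m A ` {..<n}"

end

theory Submission
  imports Defs
begin

text \<open>Columns with the same support E carry entries \<open>\<plusminus>1\<close> on E. Among three such columns
  pick a row i in which two of them differ; one of these entries is 1, so \<open>\<Delta>\<^sub>1 \<le> 1\<close> forces
  \<open>t\<^sub>i = 0\<close>, and the third column agrees with one of the two, say x, in row i. In a row i'
  where x and the third column z differ they have opposite signs, so again \<open>t\<^sub>i\<^sub>' = 0\<close>, and the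
  2x2 minor of \<open>t + A\<close> on rows i, i' and columns x, z has absolute value 2.\<close>

lemma subdet_singleton: "subdet M {i} {j} = M i j"
proof -
  have "{..<Suc 0} = {0::nat}" by auto
  then show ?thesis unfolding subdet_def by (simp add: Let_def)
qed

lemma sum_permutes_lessThan_2:
  "(\<Sum>p | p permutes {..<2::nat}. f p) = f id + f (Transposition.transpose 0 1)"
proof -
  have two: "{..<2::nat} = insert 0 {1}" by auto
  have "(\<Sum>p | p permutes {..<2::nat}. f p)
      = (\<Sum>b\<in>insert 0 {1}. \<Sum>q\<in>{p. p permutes {1::nat}}. f (Transposition.transpose 0 b \<circ> q))"
    unfolding two by (rule sum_over_permutations_insert) auto
  also have "\<dots> = f id + f (Transposition.transpose 0 1)"
    by simp
  finally show ?thesis .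
qed

lemma subdet_doubleton_ordered:
  assumes "i < i'" "j < j'"
  shows "subdet M {i, i'} {j, j'} = M i j * M i' j' - M i j' * M i' j"
proof -
  have card: "card {i, i'} = 2"
    using assms by auto
  have sorted: "sorted_list_of_set {i, i'} = [i, i']" "sorted_list_of_set {j, j'} = [j, j']"
    using assms by (simp_all add: sorted_list_of_set_insert_remove)
  have "{..<2::nat} = {0, 1}" by auto
  then show ?thesis
    unfolding subdet_def Let_def card sorted sum_permutes_lessThan_2
    by (simp add: sign_swap_id transpose_def)
qed

lemma abs_subdet_doubleton:
  assumes "i \<noteq> i'" "j \<noteq> j'"
  shows "\<bar>subdet M {i, i'} {j, j'}\<bar> = \<bar>M i j * M i' j' - M i j' * M i' j\<bar>"
proof -
  have "subdet M {i, i'} {j, j'} = subdet M {min i i', max i i'} {min j j', max j j'}"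
    by (simp add: min_def max_def insert_commute)
  also have "\<dots> = M (min i i') (min j j') * M (max i i') (max j j')
      - M (min i i') (max j j') * M (max i i') (min j j')"
    using assms by (intro subdet_doubleton_ordered) auto
  finally show ?thesis
    using assms
    by (cases "i < i'"; cases "j < j'") (simp_all add: min_def max_def abs_minus_commute mult.commute)
qed

lemma abs_subdet_le_Delta:
  assumes "R \<subseteq> {..<m}" "C \<subseteq> {..<n}" "card R = k" "card C = k"
  shows "\<bar>subdet M R C\<bar> \<le> Delta k m n M"
proof -
  let ?minors = "{\<bar>subdet M R C\<bar> | R C. R \<subseteq> {..<m} \<and> C \<subseteq> {..<n} \<and> card R = k \<and> card C = k}"
  have "?minors \<subseteq> (\<lambda>(R, C). \<bar>subdet M R C\<bar>) ` (Pow {..<m} \<times> Pow {..<n})" by auto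
  then have "finite ?minors" by (rule finite_subset) auto
  then show ?thesis unfolding Delta_def by (intro Max_ge) (use assms in auto)
qed

lemma shift_eq_0_at_entry_1:
  assumes "i < m" "j < n" "A i j = 1" "0 \<le> t i" "Delta 1 m n (shift_mat t A) \<le> 1"
  shows "t i = 0"
proof -
  have "\<bar>subdet (shift_mat t A) {i} {j}\<bar> \<le> 1"
    using abs_subdet_le_Delta[of "{i}" m "{j}" n 1 "shift_mat t A"] assms by auto
  with assms show ?thesis by (simp add: subdet_singleton shift_mat_def)
qed

lemma shift_eq_0_at_opposite_entries:
  assumes "i < m" "x < n" "z < n" "A i x \<in> {-1, 1}" "A i z \<in> {-1, 1}" "A i x \<noteq> A i z"
    and "0 \<le> t i" "Delta 1 m n (shift_mat t A) \<le> 1"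
  shows "t i = 0"
  using assms shift_eq_0_at_entry_1[of i m x n A t] shift_eq_0_at_entry_1[of i m z n A t] by auto

lemma Delta_2_shift_ge_agree_opposite:
  assumes "i < m" "i' < m" "i \<noteq> i'" "x < n" "z < n" "x \<noteq> z" "t i = 0" "t i' = 0"
    and "A i z = A i x" "A i' z = - A i' x"
  shows "2 * \<bar>A i x * A i' x\<bar> \<le> Delta 2 m n (shift_mat t A)"
proof -
  have "\<bar>subdet (shift_mat t A) {i, i'} {x, z}\<bar> \<le> Delta 2 m n (shift_mat t A)"
    using assms by (intro abs_subdet_le_Delta) auto
  with assms show ?thesis by (simp add: abs_subdet_doubleton shift_mat_def abs_mult)
qed

lemma same_col_supp_nonzero_iff:
  assumes "col_supp m A x = col_supp m A z" "i < m"
  shows "A i x \<noteq> 0 \<longleftrightarrow> A i z \<noteq> 0"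
  using assms by (auto simp: col_supp_def set_eq_iff)

lemma same_col_supp_no_common_entry_at_shift_0:
  assumes entries: "\<forall>i<m. \<forall>j<n. A i j \<in> {-1, 0, 1}"
    and distinct_cols: "\<forall>j<n. \<forall>j'<n. j \<noteq> j' \<longrightarrow> (\<exists>i<m. A i j \<noteq> A i j')"
    and t_nonneg: "\<forall>i<m. 0 \<le> t i"
    and Delta_1: "Delta 1 m n (shift_mat t A) \<le> 1" and Delta_2: "Delta 2 m n (shift_mat t A) \<le> 1"
    and cols: "x < n" "z < n" "x \<noteq> z" "col_supp m A x = col_supp m A z"
    and row: "i < m" "A i z = A i x" "A i x \<noteq> 0" "t i = 0"
  shows False
proof -
  obtain i' where i': "i' < m" "A i' x \<noteq> A i' z"
    using distinct_cols cols by blast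
  have "A i' x \<noteq> 0" "A i' z \<noteq> 0"
    using same_col_supp_nonzero_iff[OF cols(4) i'(1)] i'(2) by auto
  then have pm: "A i' x \<in> {-1, 1}" "A i' z \<in> {-1, 1}"
    using entries i'(1) cols(1,2) by auto
  then have opposite: "A i' z = - A i' x"
    using i'(2) by auto
  have "t i' = 0"
    using shift_eq_0_at_opposite_entries[of i' m x n z A t] i' cols pm t_nonneg Delta_1 by simp
  moreover have "i \<noteq> i'"
    using row(2) i'(2) by auto
  ultimately have "2 * \<bar>A i x * A i' x\<bar> \<le> Delta 2 m n (shift_mat t A)"
    using row(1,2,4) i'(1) cols(1-3) opposite
    by (intro Delta_2_shift_ge_agree_opposite[of i m i' x n z t A]) simp_all
  moreover have "A i x \<in> {-1, 1}"
    using entries row(1,3) cols(1) by auto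
  ultimately show False
    using pm Delta_2 by (auto simp: abs_mult)
qed

theorem proposition3p1:
  fixes m n :: nat and A :: "nat \<Rightarrow> nat \<Rightarrow> real" and t :: "nat \<Rightarrow> real"
  assumes entries: "\<forall>i<m. \<forall>j<n. A i j \<in> {-1, 0, 1}"
    and distinct_cols: "\<forall>j<n. \<forall>j'<n. j \<noteq> j' \<longrightarrow> (\<exists>i<m. A i j \<noteq> A i j')"
    and t_range: "\<forall>i<m. 0 \<le> t i \<and> t i < 1"
    and Delta_le: "\<forall>k\<in>{1, 2}. Delta k m n (shift_mat t A) \<le> 1"
  shows "\<forall>E\<in>supp_sets m n A. card {j. j < n \<and> col_supp m A j = E} \<le> 2"
proof (rule ballI, rule ccontr)
  fix E
  let ?S = "{j. j < n \<and> col_supp m A j = E}"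
  have t_nonneg: "\<forall>i<m. 0 \<le> t i" and Delta_1: "Delta 1 m n (shift_mat t A) \<le> 1"
    and Delta_2: "Delta 2 m n (shift_mat t A) \<le> 1"
    using t_range Delta_le by auto
  assume "\<not> card ?S \<le> 2"
  then obtain B where "B \<subseteq> ?S" "card B = 3"
    using obtain_subset_with_card_n[of 3 ?S] by auto
  then obtain u v w where uvw: "u \<in> ?S" "v \<in> ?S" "w \<in> ?S" "u \<noteq> v" "v \<noteq> w" "u \<noteq> w"
    unfolding card_3_iff by auto
  obtain i where i: "i < m" "A i u \<noteq> A i v"
    using distinct_cols uvw by blast
  have "A i u \<noteq> 0" "A i v \<noteq> 0" "A i w \<noteq> 0"
    using same_col_supp_nonzero_iff[of m A v u i] same_col_supp_nonzero_iff[of m A w u i] uvw i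
    by auto
  then have pm: "A i u \<in> {-1, 1}" "A i v \<in> {-1, 1}" "A i w \<in> {-1, 1}"
    using entries i(1) uvw(1-3) by auto
  have "t i = 0"
    using shift_eq_0_at_opposite_entries[of i m u n v A t] i uvw pm t_nonneg Delta_1 by simp
  moreover obtain x where "x \<in> {u, v}" "A i w = A i x"
    using pm i(2) by (metis insert_iff singletonD)
  ultimately show False
    using uvw pm i(1)
    by (intro same_col_supp_no_common_entry_at_shift_0
        [OF entries distinct_cols t_nonneg Delta_1 Delta_2, of x w i]) auto
qed

end
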